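(* For every $\eta\in(0,\tfrac14)$, the Multiplicative Weights mechanism $M^*_\eta$ is $4\eta$-approximately truthful.
   Context: Setting: $n$ forecasters, $m$ binary events with outcomes $\vec y\in\{0,1\}^m$; forecaster $i$ has beliefs $p_i\in[0,1]^m$ (believing events independent) and reports $r_i\in[0,1]^m$. Quadratic score $S(q,y)=1-(y-q)^2$. Multiplicative Weights: $M^*_\eta(R,\vec y)_i=\exp(\eta\sum_tS(r_{it},y_t))/\sum_j\exp(\eta\sum_tS(r_{jt},y_t))$. $M(R;p_i)=\mathbb{E}_{\vec y\sim p_i}M(R,\vec y)$ with $y_t\sim\mathrm{Bernoulli}(p_{it})$ independently. For fixed $p_i$, $\hat r_i$ strictly dominates $r_i$ if $M(\hat r_i,R_{-i};p_i)_i>M(r_i,R_{-i};p_i)_i$ for all $R_{-i}$; $r_i$ is undominated if nothing strictly dominates it. A mechanism is $\gamma$-approximately truthful if for all $p_i$ an undominated report exists and every undominated report $r_i$ satisfies $\|r_i-p_i\|_\infty\le\gamma$. *)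

theory Defs
  imports Complex_Main
begin

text \<open>Forecasters are indexed by {0..<n}, events by {0..<m}.
  An outcome vector y in {0,1}^m is represented by the set Y \<subseteq> {0..<m}
  of events that occur (y_t = 1 iff t \<in> Y).\<close>

type_synonym mechanism = "(nat \<Rightarrow> nat \<Rightarrow> real) \<Rightarrow> nat set \<Rightarrow> nat \<Rightarrow> real"

definition outcome :: "nat set \<Rightarrow> nat \<Rightarrow> real" where
  "outcome Y t = (if t \<in> Y then 1 else 0)"

definition qscore :: "real \<Rightarrow> real \<Rightarrow> real" where
  "qscore q y = 1 - (y - q)^2"

definition MW :: "real \<Rightarrow> nat \<Rightarrow> nat \<Rightarrow> mechanism" where
  "MW \<eta> n m R Y i =
     exp (\<eta> * (\<Sum>t<m. qscore (R i t) (outcome Y t))) /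
     (\<Sum>j<n. exp (\<eta> * (\<Sum>t<m. qscore (R j t) (outcome Y t))))"

definition reports :: "nat \<Rightarrow> (nat \<Rightarrow> real) set" where
  "reports m = {r. \<forall>t<m. 0 \<le> r t \<and> r t \<le> 1}"

text \<open>Probability of outcome set Y when events are independent Bernoulli(p t).\<close>
definition outcome_prob :: "nat \<Rightarrow> (nat \<Rightarrow> real) \<Rightarrow> nat set \<Rightarrow> real" where
  "outcome_prob m p Y = (\<Prod>t<m. if t \<in> Y then p t else 1 - p t)"

definition expected_M :: "mechanism \<Rightarrow> nat \<Rightarrow> (nat \<Rightarrow> nat \<Rightarrow> real) \<Rightarrow> (nat \<Rightarrow> real) \<Rightarrow> nat \<Rightarrow> real" where
  "expected_M M m R p i = (\<Sum>Y\<in>Pow {..<m}. outcome_prob m p Y * M R Y i)"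

definition strictly_dominates ::
  "mechanism \<Rightarrow> nat \<Rightarrow> nat \<Rightarrow> nat \<Rightarrow> (nat \<Rightarrow> real) \<Rightarrow> (nat \<Rightarrow> real) \<Rightarrow> (nat \<Rightarrow> real) \<Rightarrow> bool" where
  "strictly_dominates M n m i p rhat r \<longleftrightarrow>
     (\<forall>R. (\<forall>j<n. j \<noteq> i \<longrightarrow> R j \<in> reports m) \<longrightarrow>
        expected_M M m (R(i := rhat)) p i > expected_M M m (R(i := r)) p i)"

definition undominated ::
  "mechanism \<Rightarrow> nat \<Rightarrow> nat \<Rightarrow> nat \<Rightarrow> (nat \<Rightarrow> real) \<Rightarrow> (nat \<Rightarrow> real) \<Rightarrow> bool" where
  "undominated M n m i p r \<longleftrightarrow>
     r \<in> reports m \<and> \<not> (\<exists>rhat \<in> reports m. strictly_dominates M n m i p rhat r)"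

definition approx_truthful :: "mechanism \<Rightarrow> nat \<Rightarrow> nat \<Rightarrow> real \<Rightarrow> bool" where
  "approx_truthful M n m \<gamma> \<longleftrightarrow>
     (\<forall>i<n. \<forall>p \<in> reports m.
        (\<exists>r. undominated M n m i p r) \<and>
        (\<forall>r. undominated M n m i p r \<longrightarrow> (\<forall>t<m. \<bar>r t - p t\<bar> \<le> \<gamma>)))"

end

theory Submission
  imports Defs "HOL-Analysis.Analysis"
begin

text \<open>Existence of an undominated report: against one fixed profile of the others, forecaster
  i's expected weight is a continuous function of its report, so it attains its maximum on the
  compact cube [0,1]^m, and a maximiser cannot be strictly dominated.

  Approximate truthfulness: fix an event s and condition on the outcomes of the other events.
  As a function of x = r_s, the expected weight is then a nonnegative combination of
  G(x) = p w1(x) + (1 - p) w0(x), where wy is i's share of the total weight when s resolves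
  to y and p = p_s. With vy = E W / (E + W)^2 for i's own weight E and the others' weight W,
  G'(x) = 2 \<eta> (p (1 - x) v1 - (1 - p) x v0). Flipping the outcome of s changes every
  exponent by at most \<eta>, hence v0 \<le> exp (2 \<eta>) v1; together with (1 - p) x \<le> 1/4 and
  exp (2 \<eta>) - 1 \<le> 4 \<eta> this makes G increasing below p - 4 \<eta> and, by the symmetry
  x \<mapsto> 1 - x, decreasing above p + 4 \<eta>. So moving r_s to within 4 \<eta> of p_s
  strictly dominates.\<close>

lemma exp_le_one_plus_double:
  fixes u :: real
  assumes "0 \<le> u" "u \<le> 1/2"
  shows "exp u \<le> 1 + 2 * u"
proof -
  have "exp u * (1 - u) \<le> exp u * exp (- u)"
    using exp_ge_add_one_self[of "- u"] by (intro mult_left_mono) auto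
  then have "exp u * (1 - u) \<le> 1"
    by (simp flip: exp_add)
  moreover have "1 \<le> (1 + 2 * u) * (1 - u)"
    using assms by (simp add: algebra_simps mult_left_le)
  ultimately have "exp u * (1 - u) \<le> (1 + 2 * u) * (1 - u)"
    by linarith
  then show ?thesis
    using assms by (simp add: mult_le_cancel_right)
qed

lemma exp_mult_add_le:
  fixes \<eta> A d :: real
  assumes "0 < \<eta>" "-1 \<le> d" "d \<le> 1"
  shows "exp (\<eta> * (A + d)) \<le> exp \<eta> * exp (\<eta> * A)"
    and "exp (\<eta> * A) \<le> exp \<eta> * exp (\<eta> * (A + d))"
proof -
  have "\<eta> * d \<le> \<eta>" "- \<eta> \<le> \<eta> * d"
    using mult_left_mono[OF assms(3), of \<eta>] mult_left_mono[OF assms(2), of \<eta>] assms(1)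
    by simp_all
  then show "exp (\<eta> * (A + d)) \<le> exp \<eta> * exp (\<eta> * A)"
    and "exp (\<eta> * A) \<le> exp \<eta> * exp (\<eta> * (A + d))"
    by (simp_all add: distrib_left flip: exp_add)
qed

lemma mult_le_quarter:
  fixes x p :: real
  assumes "0 \<le> x" "x \<le> p" "p \<le> 1"
  shows "(1 - p) * x \<le> 1/4"
proof -
  have "(1 - p) * x \<le> (1 - x) * x"
    using assms by (intro mult_right_mono) auto
  also have "\<dots> \<le> 1/4"
    using zero_le_power2[of "x - 1/2"] by (simp add: power2_eq_square algebra_simps)
  finally show ?thesis .
qed

definition logistic_slope :: "real \<Rightarrow> real \<Rightarrow> real" where
  "logistic_slope a b = a * b / (a + b)\<^sup>2"

lemma logistic_slope_pos: "0 < a \<Longrightarrow> 0 < b \<Longrightarrow> 0 < logistic_slope a b"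
  by (simp add: logistic_slope_def)

lemma logistic_slope_ratio_le_aux:
  fixes E1 E0 W1 W0 c :: real
  assumes pos: "0 < E1" "0 < E0" "0 < W1" "0 < W0"
    and bounds: "E0 \<le> c * E1" "W1 \<le> c * W0"
    and case_le: "E1 * W0 \<le> W1 * E0"
  shows "E0 * W0 * (E1 + W1)\<^sup>2 \<le> c\<^sup>2 * (E1 * W1) * (E0 + W0)\<^sup>2"
proof -
  have "(E1 + W1) * W0 \<le> W1 * (E0 + W0)"
    using case_le by (simp add: algebra_simps)
  then have sq: "((E1 + W1) * W0)\<^sup>2 \<le> (W1 * (E0 + W0))\<^sup>2"
    using pos by (intro power_mono) auto
  have "E0 * W1 \<le> (c * E1) * (c * W0)"
    using pos bounds by (intro mult_mono) auto
  then have cross: "E0 * W1 \<le> c\<^sup>2 * E1 * W0"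
    by (simp add: power2_eq_square algebra_simps)
  have "E0 * W0 * (E1 + W1)\<^sup>2 * W0 = E0 * ((E1 + W1) * W0)\<^sup>2"
    by (simp add: power2_eq_square algebra_simps)
  also have "\<dots> \<le> E0 * (W1 * (E0 + W0))\<^sup>2"
    using sq pos by (intro mult_left_mono) auto
  also have "\<dots> = (E0 * W1) * W1 * (E0 + W0)\<^sup>2"
    by (simp add: power2_eq_square algebra_simps)
  also have "\<dots> \<le> (c\<^sup>2 * E1 * W0) * W1 * (E0 + W0)\<^sup>2"
    using cross pos by (intro mult_right_mono) auto
  also have "\<dots> = c\<^sup>2 * (E1 * W1) * (E0 + W0)\<^sup>2 * W0"
    by (simp add: algebra_simps)
  finally show ?thesis
    using pos(4) by (rule mult_right_le_imp_le)
qed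

lemma logistic_slope_ratio_le:
  fixes E1 E0 W1 W0 c :: real
  assumes "0 < E1" "0 < E0" "0 < W1" "0 < W0"
    and "E1 \<le> c * E0" "E0 \<le> c * E1" "W1 \<le> c * W0" "W0 \<le> c * W1"
  shows "logistic_slope E0 W0 \<le> c\<^sup>2 * logistic_slope E1 W1"
proof -
  have "E0 * W0 * (E1 + W1)\<^sup>2 \<le> c\<^sup>2 * (E1 * W1) * (E0 + W0)\<^sup>2"
  proof (cases "E1 * W0 \<le> W1 * E0")
    case True
    then show ?thesis
      using assms by (intro logistic_slope_ratio_le_aux) auto
  next
    case False
    then show ?thesis
      using logistic_slope_ratio_le_aux[of W1 W0 E1 E0 c] assms
      by (simp add: ac_simps)
  qed
  moreover have "0 < (E1 + W1)\<^sup>2" "0 < (E0 + W0)\<^sup>2"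
    using assms by auto
  ultimately show ?thesis
    by (simp add: logistic_slope_def divide_simps)
qed

subsection \<open>The expected weight as a function of one report coordinate\<close>

text \<open>Forecaster i's share of the total weight when its score on the remaining events is C, the
  other forecasters carry total weight W, the event under consideration has outcome y and i
  reports x for it.\<close>

definition weight_share :: "real \<Rightarrow> real \<Rightarrow> real \<Rightarrow> real \<Rightarrow> real \<Rightarrow> real" where
  "weight_share \<eta> C W y x = exp (\<eta> * (C + qscore x y)) / (exp (\<eta> * (C + qscore x y)) + W)"

definition expected_share :: "real \<Rightarrow> real \<Rightarrow> real \<Rightarrow> real \<Rightarrow> real \<Rightarrow> real \<Rightarrow> real" where
  "expected_share \<eta> p C W1 W0 x = p * weight_share \<eta> C W1 1 x + (1 - p) * weight_share \<eta> C W0 0 x"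

lemma qscore_one_eq: "qscore x 1 = qscore x 0 + (2 * x - 1)"
  by (simp add: qscore_def power2_eq_square algebra_simps)

lemma weight_share_has_real_derivative:
  assumes "0 < W"
  shows "(weight_share \<eta> C W y has_real_derivative
            \<eta> * (2 * (y - x)) * logistic_slope (exp (\<eta> * (C + qscore x y))) W) (at x)"
proof -
  have "exp (\<eta> * (C + qscore x y)) + W \<noteq> 0"
    using assms by (smt (verit) exp_gt_zero)
  then show ?thesis
    unfolding weight_share_def[abs_def] logistic_slope_def qscore_def
    by (auto intro!: derivative_eq_intros simp: power2_eq_square field_simps)
qed

lemma expected_share_has_real_derivative:
  assumes "0 < W1" "0 < W0"
  shows "(expected_share \<eta> p C W1 W0 has_real_derivative
            2 * \<eta> * (p * (1 - x) * logistic_slope (exp (\<eta> * (C + qscore x 1))) W1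
                     - (1 - p) * x * logistic_slope (exp (\<eta> * (C + qscore x 0))) W0)) (at x)"
  unfolding expected_share_def[abs_def]
  by (rule derivative_eq_intros weight_share_has_real_derivative assms refl)+
     (simp add: algebra_simps)

lemma expected_share_reflect:
  "expected_share \<eta> p C W1 W0 (1 - x) = expected_share \<eta> (1 - p) C W0 W1 x"
  by (simp add: expected_share_def weight_share_def qscore_def power2_commute algebra_simps)

lemma expected_share_strict_mono_below:
  assumes "0 < \<eta>" "\<eta> < 1/4" "0 \<le> p" "p \<le> 1" "0 < W1" "0 < W0"
    and "W1 \<le> exp \<eta> * W0" "W0 \<le> exp \<eta> * W1"
    and "0 \<le> a" "a < p - 4 * \<eta>"
  shows "expected_share \<eta> p C W1 W0 a < expected_share \<eta> p C W1 W0 (p - 4 * \<eta>)"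
proof (rule DERIV_pos_imp_increasing[OF assms(10)])
  fix x assume x: "a \<le> x" "x \<le> p - 4 * \<eta>"
  define E1 E0 where "E1 = exp (\<eta> * (C + qscore x 1))" and "E0 = exp (\<eta> * (C + qscore x 0))"
  define v1 v0 where "v1 = logistic_slope E1 W1" and "v0 = logistic_slope E0 W0"
  have "E1 \<le> exp \<eta> * E0" "E0 \<le> exp \<eta> * E1"
    using exp_mult_add_le[OF assms(1), of "2 * x - 1" "C + qscore x 0"] x assms
    by (simp_all add: E1_def E0_def qscore_one_eq add.assoc)
  then have "v0 \<le> (exp \<eta>)\<^sup>2 * v1"
    unfolding v0_def v1_def using assms by (intro logistic_slope_ratio_le) (auto simp: E1_def E0_def)
  moreover have "(exp \<eta>)\<^sup>2 \<le> 1 + 4 * \<eta>"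
    using exp_le_one_plus_double[of "2 * \<eta>"] assms by (simp add: exp_double[symmetric])
  moreover have v1_pos: "0 < v1"
    using assms by (simp add: v1_def E1_def logistic_slope_pos)
  ultimately have v0_le: "v0 \<le> (1 + 4 * \<eta>) * v1"
    by (meson less_imp_le mult_right_mono order_trans)
  have "(1 - p) * x * (4 * \<eta>) \<le> 1/4 * (4 * \<eta>)"
    using mult_le_quarter[of x p] x assms by (intro mult_right_mono) auto
  then have "0 < p * (1 - x) - (1 - p) * x * (1 + 4 * \<eta>)"
    using x assms(1) by (simp add: algebra_simps)
  then have "0 < (p * (1 - x) - (1 - p) * x * (1 + 4 * \<eta>)) * v1"
    using v1_pos by simp
  moreover have "(1 - p) * x * v0 \<le> (1 - p) * x * ((1 + 4 * \<eta>) * v1)"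
    using v0_le x assms by (intro mult_left_mono) auto
  ultimately have "0 < p * (1 - x) * v1 - (1 - p) * x * v0"
    by (simp add: algebra_simps)
  then have "0 < 2 * \<eta> * (p * (1 - x) * v1 - (1 - p) * x * v0)"
    using assms(1) by simp
  then show "\<exists>y. (expected_share \<eta> p C W1 W0 has_real_derivative y) (at x) \<and> 0 < y"
    using expected_share_has_real_derivative[OF assms(5,6)]
    unfolding v1_def v0_def E1_def E0_def by blast
qed

lemma expected_share_strict_antimono_above:
  assumes "0 < \<eta>" "\<eta> < 1/4" "0 \<le> p" "p \<le> 1" "0 < W1" "0 < W0"
    and "W1 \<le> exp \<eta> * W0" "W0 \<le> exp \<eta> * W1"
    and "a \<le> 1" "p + 4 * \<eta> < a"
  shows "expected_share \<eta> p C W1 W0 a < expected_share \<eta> p C W1 W0 (p + 4 * \<eta>)"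
  using expected_share_strict_mono_below[of \<eta> "1 - p" W0 W1 "1 - a" C] assms
    expected_share_reflect[of \<eta> p C W1 W0 "1 - a"]
    expected_share_reflect[of \<eta> p C W1 W0 "1 - p - 4 * \<eta>"]
  by (simp add: algebra_simps)

lemma expected_share_lt_towards_belief:
  assumes "0 < \<eta>" "\<eta> < 1/4" "0 \<le> p" "p \<le> 1" "0 < W1" "0 < W0"
    and "W1 \<le> exp \<eta> * W0" "W0 \<le> exp \<eta> * W1"
    and "0 \<le> x" "x \<le> 1" "4 * \<eta> < \<bar>x - p\<bar>"
  shows "expected_share \<eta> p C W1 W0 x
           < expected_share \<eta> p C W1 W0 (if x < p then p - 4 * \<eta> else p + 4 * \<eta>)"
  using expected_share_strict_mono_below[of \<eta> p W1 W0 x C]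
    expected_share_strict_antimono_above[of \<eta> p W1 W0 x C] assms
  by (cases "x < p") auto

subsection \<open>Conditioning on the outcomes of all events but one\<close>

definition score :: "nat \<Rightarrow> (nat \<Rightarrow> real) \<Rightarrow> nat set \<Rightarrow> real" where
  "score m r Y = (\<Sum>t<m. qscore (r t) (outcome Y t))"

definition score_except :: "nat \<Rightarrow> (nat \<Rightarrow> real) \<Rightarrow> nat \<Rightarrow> nat set \<Rightarrow> real" where
  "score_except m r s Y = (\<Sum>t\<in>{..<m} - {s}. qscore (r t) (outcome Y t))"

definition others_weight :: "real \<Rightarrow> nat \<Rightarrow> nat \<Rightarrow> (nat \<Rightarrow> nat \<Rightarrow> real) \<Rightarrow> nat \<Rightarrow> nat set \<Rightarrow> real" where
  "others_weight \<eta> n m R i Y = (\<Sum>j\<in>{..<n} - {i}. exp (\<eta> * score m (R j) Y))"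

definition outcome_prob_except :: "nat \<Rightarrow> (nat \<Rightarrow> real) \<Rightarrow> nat \<Rightarrow> nat set \<Rightarrow> real" where
  "outcome_prob_except m p s Y = (\<Prod>t\<in>{..<m} - {s}. if t \<in> Y then p t else 1 - p t)"

lemma MW_eq_score:
  "MW \<eta> n m R Y i = exp (\<eta> * score m (R i) Y) / (\<Sum>j<n. exp (\<eta> * score m (R j) Y))"
  by (simp add: MW_def score_def)

lemma sum_Pow_remove:
  assumes "finite A" "s \<in> A"
  shows "(\<Sum>Y\<in>Pow A. f Y) = (\<Sum>Y\<in>Pow (A - {s}). f Y + f (insert s Y))"
proof -
  have "Pow A = Pow (A - {s}) \<union> insert s ` Pow (A - {s})"
    using Pow_insert[of s "A - {s}"] assms(2) by (simp add: insert_absorb)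
  moreover have "Pow (A - {s}) \<inter> insert s ` Pow (A - {s}) = {}"
    by auto
  moreover have "inj_on (insert s) (Pow (A - {s}))"
    by (auto simp: inj_on_def)
  ultimately show ?thesis
    using assms(1) by (simp add: sum.union_disjoint sum.reindex sum.distrib)
qed

lemma score_fun_upd:
  assumes "s < m"
  shows "score m (r(s := x)) Y = score_except m r s Y + qscore x (outcome Y s)"
  using assms unfolding score_def score_except_def
  by (subst sum.remove[of "{..<m}" s]) (auto intro!: sum.cong)

lemma score_except_insert: "score_except m r s (insert s Y) = score_except m r s Y"
  unfolding score_except_def by (intro sum.cong) (auto simp: outcome_def)

lemma score_insert:
  assumes "s < m" "s \<notin> Y"
  shows "score m r (insert s Y) = score m r Y + (2 * r s - 1)"
  using score_fun_upd[OF assms(1), of r "r s" "insert s Y"] score_fun_upd[OF assms(1), of r "r s" Y]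
    assms(2)
  by (simp add: score_except_insert outcome_def qscore_one_eq)

lemma sum_fun_upd_remove:
  fixes i n :: nat
  assumes "i < n"
  shows "(\<Sum>j<n. g ((R(i := v)) j)) = g v + (\<Sum>j\<in>{..<n} - {i}. g (R j))"
proof -
  have "(\<Sum>j<n. g ((R(i := v)) j)) = g v + (\<Sum>j\<in>{..<n} - {i}. g ((R(i := v)) j))"
    using assms by (subst sum.remove[of "{..<n}" i]) auto
  also have "(\<Sum>j\<in>{..<n} - {i}. g ((R(i := v)) j)) = (\<Sum>j\<in>{..<n} - {i}. g (R j))"
    by (intro sum.cong) auto
  finally show ?thesis .
qed

lemma MW_fun_upd_eq_weight_share:
  assumes "i < n" "s < m"
  shows "MW \<eta> n m (R(i := r(s := x))) Y i
           = weight_share \<eta> (score_except m r s Y) (others_weight \<eta> n m R i Y) (outcome Y s) x"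
  using sum_fun_upd_remove[OF assms(1), of "\<lambda>q. exp (\<eta> * score m q Y)" R "r(s := x)"]
  by (simp add: MW_eq_score others_weight_def weight_share_def score_fun_upd[OF assms(2)])

lemma outcome_prob_remove:
  assumes "s < m" "s \<notin> Y"
  shows "outcome_prob m p Y = (1 - p s) * outcome_prob_except m p s Y"
    and "outcome_prob m p (insert s Y) = p s * outcome_prob_except m p s Y"
  using assms unfolding outcome_prob_def outcome_prob_except_def
  by (subst prod.remove[of "{..<m}" s]; auto intro!: prod.cong)+

lemma expected_MW_eq_sum_expected_share:
  assumes "i < n" "s < m"
  shows "expected_M (MW \<eta> n m) m (R(i := r(s := x))) p i =
    (\<Sum>Y\<in>Pow ({..<m} - {s}). outcome_prob_except m p s Y *
       expected_share \<eta> (p s) (score_except m r s Y)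
         (others_weight \<eta> n m R i (insert s Y)) (others_weight \<eta> n m R i Y) x)"
  unfolding expected_M_def using assms(2)
  by (subst sum_Pow_remove[of _ s])
     (auto intro!: sum.cong simp: outcome_prob_remove MW_fun_upd_eq_weight_share[OF assms]
       expected_share_def score_except_insert outcome_def algebra_simps)

lemma others_weight_pos:
  assumes "2 \<le> n" "i < n"
  shows "0 < others_weight \<eta> n m R i Y"
proof -
  have "(if i = 0 then 1 else 0) \<in> {..<n} - {i}"
    using assms by auto
  then show ?thesis
    unfolding others_weight_def by (intro sum_pos) auto
qed

lemma others_weight_insert_le:
  assumes "0 < \<eta>" "s < m" "s \<notin> Y" "\<forall>j<n. j \<noteq> i \<longrightarrow> R j \<in> reports m"
  shows "others_weight \<eta> n m R i (insert s Y) \<le> exp \<eta> * others_weight \<eta> n m R i Y"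
    and "others_weight \<eta> n m R i Y \<le> exp \<eta> * others_weight \<eta> n m R i (insert s Y)"
proof -
  have "-1 \<le> 2 * R j s - 1" "2 * R j s - 1 \<le> 1" if "j \<in> {..<n} - {i}" for j
    using that assms(2,4) unfolding reports_def by auto
  then show "others_weight \<eta> n m R i (insert s Y) \<le> exp \<eta> * others_weight \<eta> n m R i Y"
    and "others_weight \<eta> n m R i Y \<le> exp \<eta> * others_weight \<eta> n m R i (insert s Y)"
    unfolding others_weight_def sum_distrib_left score_insert[OF assms(2,3)]
    by (auto intro!: sum_mono exp_mult_add_le[OF assms(1)])
qed

subsection \<open>Reports far from the belief are strictly dominated\<close>

lemma far_report_strictly_dominated:
  assumes "0 < \<eta>" "\<eta> < 1/4" "2 \<le> n" "i < n" "p \<in> reports m" "r \<in> reports m" "s < m"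
    and far: "4 * \<eta> < \<bar>r s - p s\<bar>"
  shows "\<exists>rhat\<in>reports m. strictly_dominates (MW \<eta> n m) n m i p rhat r"
proof -
  define b where "b = (if r s < p s then p s - 4 * \<eta> else p s + 4 * \<eta>)"
  have p01: "0 \<le> p s" "p s \<le> 1" and r01: "0 \<le> r s" "r s \<le> 1"
    using assms(5-7) unfolding reports_def by auto
  have "r(s := b) \<in> reports m"
    using assms(1,6) p01 r01 far unfolding b_def reports_def by auto
  moreover have "expected_M (MW \<eta> n m) m (R(i := r)) p i
                   < expected_M (MW \<eta> n m) m (R(i := r(s := b))) p i"
    if others: "\<forall>j<n. j \<noteq> i \<longrightarrow> R j \<in> reports m" for R
  proof -
    define Q where "Q = outcome_prob_except m p s"
    define G where "G Y = expected_share \<eta> (p s) (score_except m r s Y)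
      (others_weight \<eta> n m R i (insert s Y)) (others_weight \<eta> n m R i Y)" for Y
    have G_less: "G Y (r s) < G Y b" if "Y \<in> Pow ({..<m} - {s})" for Y
      unfolding G_def b_def using that assms p01 r01
      by (intro expected_share_lt_towards_belief others_weight_pos others_weight_insert_le others)
        auto
    \<comment> \<open>each event takes its likelier value, so Y0 has positive probability\<close>
    define Y0 where "Y0 = {t \<in> {..<m} - {s}. 1/2 \<le> p t}"
    have "(\<Sum>Y\<in>Pow ({..<m} - {s}). Q Y * G Y (r s)) < (\<Sum>Y\<in>Pow ({..<m} - {s}). Q Y * G Y b)"
    proof (rule sum_strict_mono_ex1)
      have "0 \<le> Q Y" for Y
        using assms(5) unfolding Q_def outcome_prob_except_def reports_def
        by (intro prod_nonneg) auto
      then show "\<forall>Y\<in>Pow ({..<m} - {s}). Q Y * G Y (r s) \<le> Q Y * G Y b"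
        using G_less by (auto intro: mult_left_mono less_imp_le)
      have "0 < Q Y0"
        unfolding Q_def outcome_prob_except_def by (intro prod_pos) (auto simp: Y0_def)
      moreover have "Y0 \<in> Pow ({..<m} - {s})"
        by (auto simp: Y0_def)
      ultimately show "\<exists>Y\<in>Pow ({..<m} - {s}). Q Y * G Y (r s) < Q Y * G Y b"
        using G_less mult_strict_left_mono by blast
    qed simp
    then show ?thesis
      using expected_MW_eq_sum_expected_share[OF assms(4,7), of \<eta> R r _ p]
      unfolding Q_def G_def by (metis fun_upd_triv)
  qed
  ultimately show ?thesis
    unfolding strictly_dominates_def by blast
qed

subsection \<open>Existence of undominated reports\<close>

lemma compact_unit_box:
  "compact (Pi\<^sub>E UNIV (\<lambda>t::nat. if t < m then {0..1::real} else {0}))"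
proof -
  have "compactin (product_topology (\<lambda>_. euclidean) UNIV)
          (Pi\<^sub>E UNIV (\<lambda>t::nat. if t < m then {0..1::real} else {0}))"
    by (subst compactin_PiE) auto
  then show ?thesis
    by (simp add: euclidean_product_topology)
qed

lemma continuous_on_expected_MW:
  assumes "0 < n"
  shows "continuous_on UNIV (\<lambda>r. expected_M (MW \<eta> n m) m (R(i := r)) p i)"
proof -
  have "(\<Sum>j<n. exp (\<eta> * score m ((R(i := r)) j) Y)) \<noteq> 0" for r Y
    using assms by (intro sum_pos[THEN less_imp_neq, symmetric]) auto
  moreover have "continuous_on UNIV (\<lambda>r. (R(i := r)) j t)" for j t
    by (cases "j = i") (auto intro!: continuous_intros)
  ultimately show ?thesis
    unfolding expected_M_def MW_eq_score score_def qscore_def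
    by (auto intro!: continuous_intros)
qed

lemma score_cong: "(\<And>t. t < m \<Longrightarrow> r t = r' t) \<Longrightarrow> score m r Y = score m r' Y"
  unfolding score_def by (intro sum.cong) auto

lemma undominated_report_exists:
  assumes "i < n"
  shows "\<exists>r. undominated (MW \<eta> n m) n m i p r"
proof -
  define B where "B = Pi\<^sub>E UNIV (\<lambda>t::nat. if t < m then {0..1::real} else {0})"
  define R0 where "R0 = (\<lambda>(_::nat) (_::nat). 0::real)"
  define F where "F r = expected_M (MW \<eta> n m) m (R0(i := r)) p i" for r
  have "\<exists>r\<in>B. \<forall>r'\<in>B. F r' \<le> F r"
  proof (rule continuous_attains_sup)
    show "compact B"
      unfolding B_def by (rule compact_unit_box)
    have "(\<lambda>_. 0) \<in> B"
      unfolding B_def by auto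
    then show "B \<noteq> {}"
      by blast
    show "continuous_on B F"
      unfolding F_def using assms
      by (intro continuous_on_subset[OF continuous_on_expected_MW]) auto
  qed
  then obtain r0 where r0: "r0 \<in> B" "\<forall>r'\<in>B. F r' \<le> F r0"
    by blast
  have "r0 \<in> reports m"
    using r0(1) unfolding B_def reports_def by (auto simp: PiE_iff) (metis atLeastAtMost_iff)+
  moreover have "\<not> strictly_dominates (MW \<eta> n m) n m i p rhat r0"
    if "rhat \<in> reports m" for rhat
  proof
    assume "strictly_dominates (MW \<eta> n m) n m i p rhat r0"
    then have "F r0 < F rhat"
      unfolding strictly_dominates_def F_def by (auto simp: R0_def reports_def)
    moreover define rc where "rc t = (if t < m then rhat t else 0)" for t
    have "F rc \<le> F r0"
      using r0(2) that unfolding rc_def B_def reports_def by auto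
    moreover have "F rhat = F rc"
      unfolding F_def expected_M_def MW_eq_score
      by (intro sum.cong refl arg_cong2[where f = "(*)"] arg_cong2[where f = "(/)"] sum.cong
          arg_cong[where f = exp] arg_cong[where f = "(*) \<eta>"] score_cong) (auto simp: rc_def)
    ultimately show False
      by linarith
  qed
  ultimately show ?thesis
    unfolding undominated_def by blast
qed

theorem mainTheorem8:
  fixes \<eta> :: real and n m :: nat
  assumes "0 < \<eta>" and "\<eta> < 1/4" and "2 \<le> n"
  shows "approx_truthful (MW \<eta> n m) n m (4 * \<eta>)"
  unfolding approx_truthful_def
proof (intro allI impI ballI conjI)
  fix i p assume i: "i < n" and p: "p \<in> reports m"
  show "\<exists>r. undominated (MW \<eta> n m) n m i p r"
    using undominated_report_exists[OF i] .
  fix r t assume undom: "undominated (MW \<eta> n m) n m i p r" and t: "t < m"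
  show "\<bar>r t - p t\<bar> \<le> 4 * \<eta>"
  proof (rule ccontr)
    assume "\<not> \<bar>r t - p t\<bar> \<le> 4 * \<eta>"
    moreover have "r \<in> reports m"
      using undom unfolding undominated_def by blast
    ultimately show False
      using far_report_strictly_dominated[OF assms i p _ t] undom unfolding undominated_def
      by (meson not_le)
  qed
qed

end
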